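(* Let $\lambda\in\mathbb{C}$, $\lambda\ne1$, $\alpha\in\mathbb{C}$, $c\in\mathbb{C}\setminus\{0\}$, and let $S_n(x)\sim\left(\left(\frac{e^t-\lambda}{1-\lambda}\right)^{\alpha},\ \frac{\log(1+t)}{(1+t)^c}\right)$. Then for $n\ge1$, $$S_n(x)=\sum_{l=0}^{n-1}\binom{n-1}{l}B_l^{(l-n+1)}(cn+1)\,H_{n-l}^{(\alpha)}(x\mid\lambda).$$
   Context: For invertible $g(t)$ (nonzero constant term) and delta series $f(t)$ ($f(0)=0$, nonzero coefficient of $t$), the Sheffer sequence $S_n(x)\sim(g(t),f(t))$ is the unique polynomial sequence with $\sum_{k\ge0}S_k(y)\frac{t^k}{k!}=\frac{1}{g(\bar f(t))}e^{y\bar f(t)}$ for all $y\in\mathbb{C}$, where $\bar f$ is the compositional inverse of $f$. Complex powers of series with constant term $1$ are defined by $h^a=\exp(a\log h)$. The Bernoulli polynomials of order $a$ are defined by $\left(\frac{t}{e^t-1}\right)^a e^{xt}=\sum_{n\ge0}B_n^{(a)}(x)\frac{t^n}{n!}$. The Frobenius–Euler polynomials of order $\alpha$ are defined by $\left(\frac{1-\lambda}{e^t-\lambda}\right)^{\alpha} e^{xt}=\sum_{n\ge0}H_n^{(\alpha)}(x\mid\lambda)\frac{t^n}{n!}$. *)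

theory Defs
  imports "HOL-Computational_Algebra.Formal_Power_Series" "HOL-Computational_Algebra.Polynomial"
begin

text \<open>Logarithm of a formal power series with constant term 1: the unique series
  with zero constant term whose derivative is h'/h (i.e. log h = sum of (-1)^(k+1)(h-1)^k/k).\<close>
definition fps_log :: "complex fps \<Rightarrow> complex fps" where
  "fps_log h = fps_integral0 (fps_deriv h * inverse h)"

definition fps_cpow :: "complex fps \<Rightarrow> complex \<Rightarrow> complex fps" where
  "fps_cpow h a = fps_exp 1 oo (fps_const a * fps_log h)"

definition is_sheffer :: "complex fps \<Rightarrow> complex fps \<Rightarrow> (nat \<Rightarrow> complex poly) \<Rightarrow> bool" where
  "is_sheffer g f S \<longleftrightarrow>
     fps_nth g 0 \<noteq> 0 \<and> fps_nth f 0 = 0 \<and> fps_nth f 1 \<noteq> 0 \<and>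
     (\<forall>y::complex. Abs_fps (\<lambda>k. poly (S k) y / fact k)
         = inverse (g oo fps_inv f) * (fps_exp y oo fps_inv f))"

definition bernoulli_ord :: "complex \<Rightarrow> nat \<Rightarrow> complex \<Rightarrow> complex" where
  "bernoulli_ord a n x =
     fact n * fps_nth (fps_cpow (fps_X / (fps_exp 1 - 1)) a * fps_exp x) n"

definition frob_euler :: "complex \<Rightarrow> complex \<Rightarrow> nat \<Rightarrow> complex \<Rightarrow> complex" where
  "frob_euler lam \<alpha> n x =
     fact n * fps_nth (fps_cpow (fps_const (1 - lam) * inverse (fps_exp 1 - fps_const lam)) \<alpha>
               * fps_exp x) n"

end

theory Submission
  imports Defs "HOL-Computational_Algebra.Formal_Laurent_Series"
begin

text \<open>
  By the Sheffer property, S_n(x)/n! = [t^n] Phi(fbar(t)) with Phi(t) = e^(xt)/g(t), whose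
  coefficients are H_m(x|lambda)/m!. Lagrange inversion, obtained from the invariance of the
  formal residue under a change of variables, gives n [t^n] fbar(t)^m = m res(f(t)^(-n) t^(m-1)).
  The substitution t = e^s - 1 turns f(t) = log(1+t)/(1+t)^c into s e^(-cs), so the residue
  becomes [s^(n-1)] e^((cn+1)s) (e^s - 1)^(m-1), which is B_(n-m)^(1-m)(cn+1)/(n-m)! because
  (s/(e^s - 1))^(1-m) = ((e^s - 1)/s)^(m-1). Collecting factorials yields binomial(n-1, n-m),
  and reindexing by l = n - m gives the formula.
\<close>

lemma fps_cpow_nth_0 [simp]: "fps_cpow h a $ 0 = 1"
  by (simp add: fps_cpow_def)

lemma fps_deriv_fps_cpow:
  assumes "h $ 0 \<noteq> 0"
  shows "fps_deriv (fps_cpow h a) * h = fps_const a * fps_deriv h * fps_cpow h a"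
proof -
  have "fps_deriv (fps_cpow h a) = fps_cpow h a * (fps_const a * (fps_deriv h * inverse h))"
    by (simp add: fps_cpow_def fps_compose_deriv fps_log_def fps_deriv_fps_integral)
  then have "fps_deriv (fps_cpow h a) * h
      = fps_const a * fps_deriv h * fps_cpow h a * (inverse h * h)"
    by (simp add: algebra_simps)
  with assms show ?thesis by (simp add: inverse_mult_eq_1)
qed

lemma fps_cpow_unique:
  assumes h0: "h $ 0 \<noteq> 0" and P0: "P $ 0 = 1"
    and P: "fps_deriv P * h = fps_const a * fps_deriv h * P"
  shows "P = fps_cpow h a"
proof -
  define Q where "Q = fps_cpow h a"
  have Q0: "Q $ 0 \<noteq> 0" by (simp add: Q_def)
  have Q: "fps_deriv Q * h = fps_const a * fps_deriv h * Q"
    unfolding Q_def by (rule fps_deriv_fps_cpow[OF h0])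
  have QQ: "Q * inverse Q = 1" using Q0 by (rule inverse_mult_eq_1')
  have "fps_deriv (P * inverse Q) * h
      = (fps_deriv P * h) * inverse Q - P * (fps_deriv Q * h) * inverse Q ^ 2"
    using Q0 by (simp add: fps_inverse_deriv algebra_simps)
  also have "\<dots> = fps_const a * fps_deriv h * P * inverse Q * (1 - Q * inverse Q)"
    unfolding P Q by (simp add: algebra_simps power2_eq_square)
  finally have "fps_deriv (P * inverse Q) * h = 0" by (simp add: QQ)
  moreover have "h \<noteq> 0" using h0 by auto
  ultimately have "fps_deriv (P * inverse Q) = 0" by simp
  then have "P * inverse Q = fps_const ((P * inverse Q) $ 0)" by (metis fps_deriv_eq_0_iff)
  also have "\<dots> = 1" using P0 by (simp add: Q_def)
  finally have "P * inverse Q * Q = Q" by simp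
  then show ?thesis using Q0 by (simp add: mult.assoc inverse_mult_eq_1 Q_def)
qed

lemma fps_cpow_add:
  assumes "h $ 0 \<noteq> 0"
  shows "fps_cpow h (a + b) = fps_cpow h a * fps_cpow h b"
proof (rule fps_cpow_unique[OF assms, symmetric])
  show "fps_deriv (fps_cpow h a * fps_cpow h b) * h
      = fps_const (a + b) * fps_deriv h * (fps_cpow h a * fps_cpow h b)"
  proof -
    have "fps_deriv (fps_cpow h a * fps_cpow h b) * h
        = (fps_deriv (fps_cpow h a) * h) * fps_cpow h b
          + fps_cpow h a * (fps_deriv (fps_cpow h b) * h)"
      by (simp add: algebra_simps)
    then show ?thesis
      unfolding fps_deriv_fps_cpow[OF assms] by (simp add: algebra_simps flip: fps_const_add)
  qed
qed simp

lemma fps_cpow_0 [simp]: "fps_cpow h 0 = 1"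
  by (simp add: fps_cpow_def)

lemma fps_cpow_1:
  assumes "h $ 0 = 1"
  shows "fps_cpow h 1 = h"
  by (rule fps_cpow_unique[symmetric]) (use assms in simp_all)

lemma fps_cpow_of_nat:
  assumes "h $ 0 = 1"
  shows "fps_cpow h (of_nat k) = h ^ k"
  by (induction k) (simp_all add: assms fps_cpow_add fps_cpow_1)

lemma fps_cpow_uminus:
  assumes "h $ 0 \<noteq> 0"
  shows "fps_cpow h (- a) = inverse (fps_cpow h a)"
  using fps_cpow_add[OF assms, of a "- a"] by (simp add: fps_inverse_unique)

lemma fps_log_inverse:
  assumes "h $ 0 \<noteq> 0"
  shows "fps_log (inverse h) = - fps_log h"
proof -
  have "fps_deriv (inverse h) * inverse (inverse h) = - (fps_deriv h * inverse h) * (inverse h * h)"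
    using assms by (simp add: fps_inverse_deriv power2_eq_square algebra_simps)
  then show ?thesis
    using assms by (simp add: fps_log_def inverse_mult_eq_1 fps_integral0_neg)
qed

lemma fps_cpow_inverse:
  assumes "h $ 0 \<noteq> 0"
  shows "fps_cpow (inverse h) a = inverse (fps_cpow h a)"
proof -
  have "fps_cpow (inverse h) a = fps_cpow h (- a)"
    using assms by (simp add: fps_cpow_def fps_log_inverse flip: fps_const_neg)
  then show ?thesis using fps_cpow_uminus[OF assms] by simp
qed

lemma fls_residue_powi_times_deriv:
  fixes h :: "'a::field_char_0 fls"
  assumes h: "fls_subdegree h = 1" and k: "k < 0"
  shows "fls_residue (h powi k * fls_deriv h) = (if k = -1 then 1 else 0)"
proof (cases "k = -1")
  case True
  then show ?thesis
    using fls_residue_deriv_times_inverse_eq_subdegree(2)[of h] h by (simp add: power_int_def)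
next
  case False
  define i where "i = nat (- k - 2)"
  have "k = - int i - 2" using k False by (simp add: i_def)
  then have hk: "h powi k = inverse h ^ (i + 2)"
    by (simp add: power_int_def nat_add_distrib)
  have "0 = fls_residue (fls_deriv (inverse h ^ (i + 1)))"
    by (simp only: fls_residue_deriv)
  also have "fls_deriv (inverse h ^ (i + 1))
      = of_nat (i + 1) * inverse h ^ i * (- fls_deriv h * inverse h ^ 2)"
    by (subst fls_deriv_power) (simp add: fls_inverse_deriv)
  also have "\<dots> = - (of_nat (i + 1) * (inverse h ^ (i + 2) * fls_deriv h))"
    by (simp add: power2_eq_square power_add mult_ac)
  finally show ?thesis
    using False hk by (simp add: fls_of_nat del: of_nat_Suc)
qed

lemma fls_compose_fps_X_intpow:
  fixes H :: "'a::field fps"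
  assumes "H \<noteq> 0" and "H $ 0 = 0"
  shows "fls_compose_fps (fls_X_intpow k) H = fps_to_fls H powi k"
  using fls_compose_fps_powi[OF assms, of fls_X k] by simp

lemma fls_residue_compose_fps_X_intpow:
  fixes H :: "'a::field_char_0 fps"
  assumes H0: "H $ 0 = 0" and H1: "H $ 1 \<noteq> 0" and k: "k < 0"
  shows "fls_residue (fls_compose_fps (fls_X_intpow k) H * fps_to_fls (fps_deriv H))
           = fls_residue (fls_X_intpow k :: 'a fls)"
proof -
  have "subdegree H = 1" using H0 H1 by (intro subdegreeI) auto
  then have "fls_subdegree (fps_to_fls H) = 1" by (simp add: fls_subdegree_fls_to_fps)
  moreover have "fls_compose_fps (fls_X_intpow k) H = fps_to_fls H powi k"
    using H0 H1 by (intro fls_compose_fps_X_intpow) auto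
  ultimately show ?thesis
    using fls_residue_powi_times_deriv[of "fps_to_fls H" k] k
    by (simp only: fls_deriv_fps_to_fls fls_residue_fls_X_intpow)
qed

lemma fls_residue_compose_fps_to_fls:
  fixes H :: "'a::field fps"
  assumes "H \<noteq> 0" and "H $ 0 = 0"
  shows "fls_residue (fls_compose_fps (fps_to_fls F) H * fps_to_fls G) = 0"
  using assms by (simp flip: fls_times_fps_to_fls)

text \<open>The principal part of F is peeled off one monomial at a time; power series have
  residue zero on both sides.\<close>

lemma fls_residue_compose_fps:
  fixes H :: "'a::field_char_0 fps"
  assumes H0: "H $ 0 = 0" and H1: "H $ 1 \<noteq> 0"
  shows "fls_residue (fls_compose_fps F H * fps_to_fls (fps_deriv H)) = fls_residue F"
proof -
  have Hn: "H \<noteq> 0" using H1 by auto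
  have "fls_residue (fls_compose_fps F H * fps_to_fls (fps_deriv H)) = fls_residue F"
    if "\<forall>k < - int N. fls_nth F k = 0" for N F
    using that
  proof (induction N arbitrary: F)
    case 0
    then have "0 \<le> fls_subdegree F" by (intro fls_subdegree_ge0I) auto
    then have F: "F = fps_to_fls (fls_regpart F)" by simp
    show ?case
      by (subst (1 2) F) (simp only: fls_residue_compose_fps_to_fls[OF Hn H0]
          fls_residue_power_series fls_subdegree_fls_to_fps_gt0)
  next
    case (Suc N)
    define k where "k = - int (Suc N)"
    define c where "c = fls_nth F k"
    define F' where "F' = F - fls_const c * fls_X_intpow k"
    have "\<forall>j < - int N. fls_nth F' j = 0"
      using Suc.prems by (auto simp: F'_def c_def k_def fls_X_intpow_times_conv_shift)
        (rule arg_cong[where f = "fls_nth F"], linarith)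
    then have IH: "fls_residue (fls_compose_fps F' H * fps_to_fls (fps_deriv H)) = fls_residue F'"
      by (rule Suc.IH)
    have F: "F = F' + fls_const c * fls_X_intpow k" by (simp add: F'_def)
    have "fls_compose_fps F H * fps_to_fls (fps_deriv H)
        = fls_compose_fps F' H * fps_to_fls (fps_deriv H)
          + fls_const c * (fls_compose_fps (fls_X_intpow k) H * fps_to_fls (fps_deriv H))"
      by (subst F) (simp add: fls_compose_fps_add fls_compose_fps_mult Hn H0 algebra_simps)
    then show ?case
      using IH fls_residue_compose_fps_X_intpow[OF H0 H1, of k] arg_cong[OF F, of fls_residue]
      by (simp only: fls_residue_add fls_residue_fls_const_times) (simp add: k_def)
  qed
  moreover have "\<forall>k < - int (nat (- fls_subdegree F)). fls_nth F k = 0"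
    by (auto intro: fls_eq0_below_subdegree)
  ultimately show ?thesis by blast
qed

lemma fps_inv_nth_0 [simp]: "fps_inv f $ 0 = 0"
  by (simp add: fps_inv_def)

text \<open>Lagrange inversion: substitute t = f(s) in the identity
  n [t^n] fbar(t)^m = res(t^(-n) (fbar(t)^m)').\<close>

lemma lagrange_inversion:
  fixes f :: "'a::field_char_0 fps"
  assumes f0: "f $ 0 = 0" and f1: "f $ 1 \<noteq> 0" and n: "n \<ge> 1"
  shows "of_nat n * (fps_inv f ^ m) $ n
           = of_nat m * fls_residue (fps_to_fls f powi (- int n) * fls_X ^ (m - 1))"
proof -
  define G where "G = fps_inv f ^ m"
  have fn: "f \<noteq> 0" using f1 by auto
  have "of_nat n * G $ n = fls_nth (fps_to_fls (fps_deriv G)) (int (n - 1))"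
    using n by (cases n) (simp_all add: fps_deriv_nth)
  also have "\<dots> = fls_residue (fls_X_intpow (- int n) * fps_to_fls (fps_deriv G))"
    using n by (subst fls_residue_shift_nth) (simp add: of_nat_diff)
  also have "\<dots> = fls_residue
      (fls_compose_fps (fls_X_intpow (- int n) * fps_to_fls (fps_deriv G)) f * fps_to_fls (fps_deriv f))"
    by (rule fls_residue_compose_fps[OF f0 f1, symmetric])
  also have "fls_compose_fps (fls_X_intpow (- int n) * fps_to_fls (fps_deriv G)) f
        * fps_to_fls (fps_deriv f)
      = fps_to_fls f powi (- int n) * fps_to_fls ((fps_deriv G oo f) * fps_deriv f)"
    by (simp only: fls_compose_fps_mult[OF fn f0] fls_compose_fps_X_intpow[OF fn f0]
        fls_compose_fps_to_fls[OF fn f0] fls_times_fps_to_fls mult.assoc)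
  also have "(fps_deriv G oo f) * fps_deriv f = fps_deriv (G oo f)"
    using f0 by (simp add: fps_compose_deriv)
  also have "G oo f = fps_X ^ m"
    unfolding G_def by (subst fps_compose_power[OF f0, symmetric]) (simp add: fps_inv[OF f0 f1])
  also have "fps_deriv (fps_X ^ m) = fps_const (of_nat m) * (fps_X :: 'a fps) ^ (m - 1)"
    by (simp add: fps_deriv_power fps_of_nat)
  finally show ?thesis
    by (simp add: G_def fls_times_fps_to_fls fps_to_fls_power fls_X_power_conv_shift_1
        mult.left_commute)
qed

lemma is_sheffer_poly_eq:
  assumes "is_sheffer g f S"
  shows "poly (S n) y = fact n * ((inverse g * fps_exp y) oo fps_inv f) $ n"
proof -
  have "Abs_fps (\<lambda>k. poly (S k) y / fact k) = (inverse g * fps_exp y) oo fps_inv f"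
    using assms by (simp add: is_sheffer_def fps_compose_mult_distrib fps_inverse_compose)
  from arg_cong[OF this, of "\<lambda>F. F $ n"] show ?thesis by (simp add: field_simps)
qed

lemma frob_euler_conv_nth:
  assumes "lam \<noteq> 1"
  shows "frob_euler lam \<alpha> n x = fact n *
    (inverse (fps_cpow ((fps_exp 1 - fps_const lam) * fps_const (inverse (1 - lam))) \<alpha>)
      * fps_exp x) $ n"
proof -
  define G where "G = (fps_exp 1 - fps_const lam) * fps_const (inverse (1 - lam))"
  have G0: "G $ 0 \<noteq> 0" using assms by (simp add: G_def)
  have base: "fps_const (1 - lam) * inverse (fps_exp 1 - fps_const lam) = inverse G"
    using assms by (simp add: G_def fps_inverse_mult fps_const_inverse mult.commute)
  show ?thesis unfolding frob_euler_def base fps_cpow_inverse[OF G0] unfolding G_def ..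
qed

lemma fps_X_divide_eq_inverse_shift:
  fixes H :: "'a::field fps"
  assumes "H $ 0 = 0" and "H $ 1 \<noteq> 0"
  shows "fps_X / H = inverse (fps_shift 1 H)"
proof -
  have "H = fps_shift 1 H * fps_X"
    using assms by (intro fps_shift_times_fps_X[symmetric] subdegree_geI) auto
  then have "fps_X / H = (1 * fps_X) / (fps_shift 1 H * fps_X)" by simp
  also have "\<dots> = 1 / fps_shift 1 H" by (rule fps_divide_cancel) simp
  finally show ?thesis using assms by (simp add: fps_divide_unit)
qed

lemma bernoulli_ord_minus_of_nat:
  "bernoulli_ord (- of_nat j) l x = fact l * (fps_exp x * (fps_exp 1 - 1) ^ j) $ (l + j)"
proof -
  define E :: "complex fps" where "E = fps_shift 1 (fps_exp 1 - 1)"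
  have E0: "E $ 0 = 1" by (simp add: E_def)
  have "fps_X / (fps_exp 1 - 1) = inverse E"
    unfolding E_def by (rule fps_X_divide_eq_inverse_shift) auto
  then have "fps_cpow (fps_X / (fps_exp 1 - 1)) (- of_nat j) = E ^ j"
    using E0 by (simp add: fps_cpow_inverse fps_cpow_uminus fps_cpow_of_nat fps_nth_power_0
        fps_inverse_idempotent flip: fps_inverse_power)
  then have "bernoulli_ord (- of_nat j) l x = fact l * (fps_exp x * E ^ j * fps_X ^ j) $ (l + j)"
    by (simp add: bernoulli_ord_def fps_X_power_mult_nth mult.commute)
  also have "fps_exp x * E ^ j * fps_X ^ j = fps_exp x * (fps_exp 1 - 1) ^ j"
    unfolding E_def mult.assoc power_mult_distrib[symmetric]
    by (subst fps_shift_times_fps_X) (auto intro: subdegree_geI)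
  finally show ?thesis .
qed

abbreviation log_div_cpow :: "complex \<Rightarrow> complex fps" where
  "log_div_cpow c \<equiv> fps_log (1 + fps_X) * inverse (fps_cpow (1 + fps_X) c)"

lemma fps_log_one_plus_X: "fps_log (1 + fps_X) = fps_ln 1"
proof -
  have "fps_ln (1::complex) = fps_integral0 (fps_deriv (fps_ln 1)) + fps_const (fps_ln 1 $ 0)"
    by (simp add: fps_integral0_deriv)
  then show ?thesis by (simp add: fps_log_def fps_ln_deriv fps_ln_nth)
qed

lemma fps_log_one_plus_X_compose_exp: "fps_log (1 + fps_X) oo (fps_exp 1 - 1) = fps_X"
  by (simp add: fps_log_one_plus_X fps_ln_fps_exp_inv fps_inv_fps_exp_compose)

lemma fps_cpow_one_plus_X_compose_exp: "fps_cpow (1 + fps_X) c oo (fps_exp 1 - 1) = fps_exp c"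
proof -
  have "fps_cpow (1 + fps_X) c oo (fps_exp 1 - 1)
      = fps_exp 1 oo ((fps_const c * fps_log (1 + fps_X)) oo (fps_exp 1 - 1))"
    unfolding fps_cpow_def by (rule fps_compose_assoc[symmetric]) (simp_all add: fps_log_def)
  then show ?thesis
    by (simp add: fps_compose_mult_distrib fps_log_one_plus_X_compose_exp)
qed

lemma log_div_cpow_compose_exp:
  "log_div_cpow c oo (fps_exp 1 - 1) = fps_X * fps_exp (- c)"
  by (simp add: fps_compose_mult_distrib fps_inverse_compose fps_log_one_plus_X_compose_exp
      fps_cpow_one_plus_X_compose_exp fps_exp_neg)

lemma log_div_cpow_nth_1: "log_div_cpow c $ 1 = 1"
  by (simp add: fps_mult_nth fps_log_one_plus_X fps_ln_nth)

lemma fps_to_fls_X_times_exp_powi: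
  fixes c :: "'a::field_char_0"
  shows "fps_to_fls (fps_X * fps_exp (- c)) powi (- int n)
           = fls_X_intpow (- int n) * fps_to_fls (fps_exp (of_nat n * c))"
proof -
  have "fps_to_fls (fps_exp (- c)) powi (- int n) = inverse (fps_to_fls (fps_exp (- c))) ^ n"
    by (simp only: power_int_minus power_int_of_nat flip: power_inverse)
  also have "inverse (fps_to_fls (fps_exp (- c))) = fps_to_fls (fps_exp c)"
    by (simp add: fls_inverse_fps_to_fls subdegree_eq_0 fps_exp_neg)
  finally have "fps_to_fls (fps_exp (- c)) powi (- int n) = fps_to_fls (fps_exp (of_nat n * c))"
    by (simp add: fps_exp_power_mult flip: fps_to_fls_power)
  then show ?thesis
    by (simp add: fls_times_fps_to_fls power_int_mult_distrib)
qed

lemma residue_log_div_cpow_powi: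
  assumes n: "n \<ge> 1"
  shows "fls_residue (fps_to_fls (log_div_cpow c) powi (- int n) * fls_X ^ j)
           = (fps_exp (c * of_nat n + 1) * (fps_exp 1 - 1) ^ j) $ (n - 1)"
proof -
  define f where "f = log_div_cpow c"
  define H :: "complex fps" where "H = fps_exp 1 - 1"
  have H0: "H $ 0 = 0" and H1: "H $ 1 \<noteq> 0" and Hn: "H \<noteq> 0"
    by (auto simp: H_def fps_eq_iff intro!: exI[of _ 1])
  have "fls_residue (fps_to_fls f powi (- int n) * fls_X ^ j)
      = fls_residue (fls_compose_fps (fps_to_fls f powi (- int n) * fls_X ^ j) H
          * fps_to_fls (fps_deriv H))"
    by (rule fls_residue_compose_fps[OF H0 H1, symmetric])
  also have "fls_compose_fps (fps_to_fls f powi (- int n) * fls_X ^ j) H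
      = fps_to_fls (f oo H) powi (- int n) * fps_to_fls H ^ j"
    by (simp only: fls_compose_fps_mult[OF Hn H0] fls_compose_fps_powi[OF Hn H0]
        fls_compose_fps_to_fls[OF Hn H0] fls_compose_fps_power[OF Hn H0] fls_compose_fps_X)
  also have "f oo H = fps_X * fps_exp (- c)"
    unfolding f_def H_def by (rule log_div_cpow_compose_exp)
  also have "fps_to_fls (fps_X * fps_exp (- c)) powi (- int n) * fps_to_fls H ^ j
        * fps_to_fls (fps_deriv H)
      = fls_X_intpow (- int n) * fps_to_fls (fps_exp (c * of_nat n + 1) * H ^ j)"
    unfolding fps_to_fls_X_times_exp_powi
    by (simp add: H_def fls_times_fps_to_fls fps_to_fls_power fps_exp_add_mult mult_ac)
  also have "fls_residue (fls_X_intpow (- int n) * fps_to_fls (fps_exp (c * of_nat n + 1) * H ^ j))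
      = (fps_exp (c * of_nat n + 1) * H ^ j) $ (n - 1)"
    unfolding fls_residue_def fls_X_intpow_times_conv_shift fls_shift_nth
    using n by (simp add: nat_diff_distrib)
  finally show ?thesis by (simp add: f_def H_def)
qed

lemma fact_times_div_eq_choose_pred:
  assumes "1 \<le> m" and "m \<le> n"
  shows "fact n * of_nat m / (of_nat n * fact m * fact (n - m))
           = (of_nat (n - 1 choose (n - m)) :: 'a::field_char_0)"
proof -
  obtain j k where m: "m = Suc j" and n: "n = Suc k" and jk: "j \<le> k"
    using assms by (cases m; cases n) auto
  have "of_nat (k choose (k - j)) = (fact k / (fact (k - j) * fact j) :: 'a)"
    using jk by (simp add: binomial_fact)
  then show ?thesis
    unfolding m n fact_Suc by (simp add: field_simps del: of_nat_Suc)
qed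

lemma fps_inv_log_div_cpow_power_nth:
  assumes m: "1 \<le> m" and mn: "m \<le> n"
  shows "fact n / fact m * (fps_inv (log_div_cpow c) ^ m) $ n
           = of_nat (n - 1 choose (n - m))
             * bernoulli_ord (- of_nat (m - 1)) (n - m) (c * of_nat n + 1)"
proof -
  define f where "f = log_div_cpow c"
  have f0: "f $ 0 = 0" by (simp add: f_def fps_log_def)
  have f1: "f $ 1 \<noteq> 0" unfolding f_def log_div_cpow_nth_1 by simp
  have "of_nat n * (fps_inv f ^ m) $ n
      = of_nat m * (fps_exp (c * of_nat n + 1) * (fps_exp 1 - 1) ^ (m - 1)) $ (n - 1)"
    using lagrange_inversion[OF f0 f1, of n m] residue_log_div_cpow_powi[of n c "m - 1"] m mn
    unfolding f_def by simp
  also have "(fps_exp (c * of_nat n + 1) * (fps_exp 1 - 1) ^ (m - 1)) $ (n - 1)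
      = bernoulli_ord (- of_nat (m - 1)) (n - m) (c * of_nat n + 1) / fact (n - m)"
    using bernoulli_ord_minus_of_nat[of "m - 1" "n - m" "c * of_nat n + 1"] m mn by simp
  finally have "fact n / fact m * (fps_inv f ^ m) $ n
      = fact n * of_nat m / (of_nat n * fact m * fact (n - m))
        * bernoulli_ord (- of_nat (m - 1)) (n - m) (c * of_nat n + 1)"
    using m mn by (simp add: field_simps)
  then show ?thesis
    unfolding f_def fact_times_div_eq_choose_pred[OF m mn] .
qed

theorem theorem6:
  fixes lam \<alpha> c :: complex and S :: "nat \<Rightarrow> complex poly"
  assumes "lam \<noteq> 1" and "c \<noteq> 0"
    and "is_sheffer
           (fps_cpow ((fps_exp 1 - fps_const lam) * fps_const (inverse (1 - lam))) \<alpha>)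
           (fps_log (1 + fps_X) * inverse (fps_cpow (1 + fps_X) c))
           S"
  shows "\<forall>n\<ge>1. \<forall>x. poly (S n) x =
           (\<Sum>l = 0..n-1. of_nat (n - 1 choose l)
               * bernoulli_ord (of_int (int l - int n + 1)) l (c * of_nat n + 1)
               * frob_euler lam \<alpha> (n - l) x)"
proof (intro allI impI)
  fix n :: nat and y :: complex
  assume n: "n \<ge> 1"
  define \<Phi> where "\<Phi> =
    inverse (fps_cpow ((fps_exp 1 - fps_const lam) * fps_const (inverse (1 - lam))) \<alpha>) * fps_exp y"
  have "poly (S n) y = (\<Sum>m = 0..n. \<Phi> $ m * (fact n * (fps_inv (log_div_cpow c) ^ m) $ n))"
    by (simp add: is_sheffer_poly_eq[OF assms(3)] fps_compose_nth sum_distrib_left \<Phi>_def mult_ac)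
  also have "\<dots> = (\<Sum>m = 1..n.
      frob_euler lam \<alpha> m y * (fact n / fact m * (fps_inv (log_div_cpow c) ^ m) $ n))"
    using n by (simp add: sum.atLeast_Suc_atMost[of 0 n] frob_euler_conv_nth[OF assms(1)] \<Phi>_def)
  also have "\<dots> = (\<Sum>m = 1..n. of_nat (n - 1 choose (n - m))
      * bernoulli_ord (- of_nat (m - 1)) (n - m) (c * of_nat n + 1) * frob_euler lam \<alpha> m y)"
    by (intro sum.cong refl, subst fps_inv_log_div_cpow_power_nth) (auto simp: mult_ac)
  also have "\<dots> = (\<Sum>l = 0..n-1. of_nat (n - 1 choose l)
               * bernoulli_ord (of_int (int l - int n + 1)) l (c * of_nat n + 1)
               * frob_euler lam \<alpha> (n - l) y)"
    by (rule sum.reindex_bij_witness[of _ "\<lambda>l. n - l" "\<lambda>m. n - m"])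
      (use n in \<open>auto simp: of_nat_diff\<close>)
  finally show "poly (S n) y = (\<Sum>l = 0..n-1. of_nat (n - 1 choose l)
               * bernoulli_ord (of_int (int l - int n + 1)) l (c * of_nat n + 1)
               * frob_euler lam \<alpha> (n - l) y)" .
qed

end
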